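(* Let $\mathbf i=(I,\varepsilon,d)$ be a feed, $k\in I$, and $\mathbf i'=(I,\varepsilon',d)$ its mutation in direction $k$. Let $\mathcal D_{\mathbf i}$, $\mathcal D_{\mathbf i'}$ be split tori over $\mathbb Q$ with coordinates $(B_i,X_i)$, $(B'_i,X'_i)$, and define $$W_{\mathbf i}:=-\tfrac12\sum_{i,j\in I}\widetilde\varepsilon_{ij}\cdot B_i\wedge B_j-\sum_{i\in I}d_i\cdot B_i\wedge X_i\in\Lambda^2\mathbb Q(\mathcal D_{\mathbf i})^*,\qquad \widetilde\varepsilon_{ij}:=d_i\varepsilon_{ij},$$ and $W_{\mathbf i'}$ in the same way from $(B'_i,X'_i)$, $\varepsilon'$, $d$ (here $\frac12\sum_{i,j}\widetilde\varepsilon_{ij}B_i\wedge B_j$ means $\sum_{i<j}\widetilde\varepsilon_{ij}B_i\wedge B_j$ for any total order on $I$). Let $\mu_k:\mathcal D_{\mathbf i}\dashrightarrow\mathcal D_{\mathbf i'}$ be the birational map $$\mu_k^*X'_k=X_k^{-1},\ \ \mu_k^*X'_i=X_i(1+X_k^{-\mathrm{sgn}(\varepsilon_{ik})})^{-\varepsilon_{ik}}\ (i\ne k),\ \ \mu_k^*B'_i=B_i\ (i\neq k),\ \ \mu_k^*B'_k=\frac{\mathbb B_k^-+X_k\mathbb B_k^+}{B_k(1+X_k)} .$$ Then, in $\Lambda^2\mathbb Q(\mathcal D_{\mathbf i})^*$, $$\mu_k^*W_{\mathbf i'}-W_{\mathbf i}=d_k\cdot\bigl((1+\widetilde X_k)\wedge\widetilde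 X_k-(1+X_k)\wedge X_k\bigr),\qquad \widetilde X_k:=X_k\prod_{j\in I}B_j^{\varepsilon_{kj}} .$$
   Context: A feed $\mathbf i=(I,\varepsilon,d)$: $I$ finite, $\varepsilon$ an integer $I\times I$ matrix, $d_i$ positive integers with $\varepsilon_{ij}d_j^{-1}$ skew-symmetric. Mutation in direction $k$: $\varepsilon'_{ij}=-\varepsilon_{ij}$ if $i=k$ or $j=k$; $\varepsilon'_{ij}=\varepsilon_{ij}$ if $\varepsilon_{ik}\varepsilon_{kj}\le0$; $\varepsilon'_{ij}=\varepsilon_{ij}+|\varepsilon_{ik}|\varepsilon_{kj}$ if $\varepsilon_{ik}\varepsilon_{kj}>0$. $\mathbb Q(\mathcal D_{\mathbf i})^*$ is the multiplicative group of the field of rational functions on $\mathcal D_{\mathbf i}$, $\Lambda^2$ its exterior square as an abelian group, and $n\cdot$ denotes the integer multiple in this group. $\mathbb B_k^+:=\prod_{j:\varepsilon_{kj}>0}B_j^{\varepsilon_{kj}}$, $\mathbb B_k^-:=\prod_{j:\varepsilon_{kj}<0}B_j^{-\varepsilon_{kj}}$; $\mathrm{sgn}$ is the sign function. *)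

theory Defs
  imports Complex_Main "HOL-Library.Poly_Mapping" "HOL-Library.Product_Lexorder"
          "HOL-Computational_Algebra.Fraction_Field"
begin

definition is_feed :: "('i::finite \<Rightarrow> 'i \<Rightarrow> int) \<Rightarrow> ('i \<Rightarrow> int) \<Rightarrow> bool" where
  "is_feed \<epsilon> d \<longleftrightarrow> (\<forall>i. d i > 0) \<and>
     (\<forall>i j. of_int (\<epsilon> i j) / of_int (d j) = - (of_int (\<epsilon> j i) / of_int (d i) :: rat))"

definition mutate :: "('i \<Rightarrow> 'i \<Rightarrow> int) \<Rightarrow> 'i \<Rightarrow> ('i \<Rightarrow> 'i \<Rightarrow> int)" where
  "mutate \<epsilon> k = (\<lambda>i j.
     if i = k \<or> j = k then - \<epsilon> i j
     else if \<epsilon> i k * \<epsilon> k j \<le> 0 then \<epsilon> i j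
     else \<epsilon> i j + \<bar>\<epsilon> i k\<bar> * \<epsilon> k j)"

text \<open>Formal integer combinations of symbols a \<and> b are finitely supported functions
  on pairs; the exterior square of K^* is their quotient by the subgroup generated by
  bimultiplicativity and alternation relations (for nonzero a, b, c).\<close>

type_synonym 'k wsum = "('k \<times> 'k) \<Rightarrow>\<^sub>0 int"

definition wedge :: "'k \<Rightarrow> 'k \<Rightarrow> 'k wsum" where
  "wedge a b = Poly_Mapping.single (a, b) 1"

definition zmult :: "int \<Rightarrow> 'k wsum \<Rightarrow> 'k wsum" where
  "zmult n x = Poly_Mapping.map (\<lambda>c. n * c) x"

inductive_set wedge_relations :: "'k::field wsum set" where
  zero: "0 \<in> wedge_relations"
| lin1: "a \<noteq> 0 \<Longrightarrow> b \<noteq> 0 \<Longrightarrow> c \<noteq> 0 \<Longrightarrow>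
         wedge (a * b) c - wedge a c - wedge b c \<in> wedge_relations"
| lin2: "a \<noteq> 0 \<Longrightarrow> b \<noteq> 0 \<Longrightarrow> c \<noteq> 0 \<Longrightarrow>
         wedge a (b * c) - wedge a b - wedge a c \<in> wedge_relations"
| alt: "a \<noteq> 0 \<Longrightarrow> wedge a a \<in> wedge_relations"
| add: "x \<in> wedge_relations \<Longrightarrow> y \<in> wedge_relations \<Longrightarrow> x + y \<in> wedge_relations"
| neg: "x \<in> wedge_relations \<Longrightarrow> - x \<in> wedge_relations"

definition wedge_eq :: "'k::field wsum \<Rightarrow> 'k wsum \<Rightarrow> bool" where
  "wedge_eq x y \<longleftrightarrow> x - y \<in> wedge_relations"

text \<open>Variable (i, False) is B_i and (i, True) is X_i; rational functions are
  fractions of polynomials with rational coefficients.\<close>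

type_synonym 'i ratfun = "((('i \<times> bool) \<Rightarrow>\<^sub>0 nat) \<Rightarrow>\<^sub>0 rat) fract"

definition var :: "'i \<times> bool \<Rightarrow> 'i::linorder ratfun" where
  "var v = Fract (Poly_Mapping.single (Poly_Mapping.single v 1) 1) 1"

definition Bvar :: "'i \<Rightarrow> 'i::linorder ratfun" where "Bvar i = var (i, False)"
definition Xvar :: "'i \<Rightarrow> 'i::linorder ratfun" where "Xvar i = var (i, True)"

definition W :: "('i::{finite,linorder} \<Rightarrow> 'i \<Rightarrow> int) \<Rightarrow> ('i \<Rightarrow> int)
                 \<Rightarrow> ('i \<Rightarrow> 'k) \<Rightarrow> ('i \<Rightarrow> 'k) \<Rightarrow> 'k wsum" where
  "W \<epsilon> d B X =
     - (\<Sum>(i,j)\<in>{(i,j). i < j}. zmult (d i * \<epsilon> i j) (wedge (B i) (B j)))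
     - (\<Sum>i\<in>UNIV. zmult (d i) (wedge (B i) (X i)))"

definition Bplus :: "('i::finite \<Rightarrow> 'i \<Rightarrow> int) \<Rightarrow> ('i \<Rightarrow> 'k::field) \<Rightarrow> 'i \<Rightarrow> 'k" where
  "Bplus \<epsilon> B k = (\<Prod>j\<in>{j. \<epsilon> k j > 0}. B j ^ nat (\<epsilon> k j))"

definition Bminus :: "('i::finite \<Rightarrow> 'i \<Rightarrow> int) \<Rightarrow> ('i \<Rightarrow> 'k::field) \<Rightarrow> 'i \<Rightarrow> 'k" where
  "Bminus \<epsilon> B k = (\<Prod>j\<in>{j. \<epsilon> k j < 0}. B j ^ nat (- \<epsilon> k j))"

definition mu_B :: "('i::finite \<Rightarrow> 'i \<Rightarrow> int) \<Rightarrow> 'i \<Rightarrow> ('i \<Rightarrow> 'k::field) \<Rightarrow> ('i \<Rightarrow> 'k) \<Rightarrow> 'i \<Rightarrow> 'k" where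
  "mu_B \<epsilon> k B X i =
     (if i = k then (Bminus \<epsilon> B k + X k * Bplus \<epsilon> B k) / (B k * (1 + X k)) else B i)"

definition mu_X :: "('i::finite \<Rightarrow> 'i \<Rightarrow> int) \<Rightarrow> 'i \<Rightarrow> ('i \<Rightarrow> 'k::field) \<Rightarrow> 'i \<Rightarrow> 'k" where
  "mu_X \<epsilon> k X i =
     (if i = k then inverse (X k)
      else X i * (1 + X k powi (- sgn (\<epsilon> i k))) powi (- \<epsilon> i k))"

definition Xtilde :: "('i::finite \<Rightarrow> 'i \<Rightarrow> int) \<Rightarrow> ('i \<Rightarrow> 'k::field) \<Rightarrow> ('i \<Rightarrow> 'k) \<Rightarrow> 'i \<Rightarrow> 'k" where
  "Xtilde \<epsilon> B X k = X k * (\<Prod>j\<in>UNIV. B j powi \<epsilon> k j)"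

end

(* All functions in the identity are Laurent monomials in the nonzero rational functions
   B_i, X_i, 1 + X_k and 1 + Xtilde_k; for mu_k^* B'_k this is the factorisation
   B_k^- + X_k B_k^+ = B_k^- (1 + Xtilde_k).  By bimultiplicativity the wedge of two Laurent
   monomials with exponent vectors u, w is the sum of u_g w_h (v_g wedge v_h), so both sides
   are images of integer matrices on these generators, and by alternation a symmetric matrix
   has image zero.  It remains to compare antisymmetric parts, a finite computation with the
   skew-symmetrised mutation rule
     d_i eps'_ij = d_i eps_ij + d_k (max (-eps_ki) 0 eps_kj - max (-eps_kj) 0 eps_ki)
   for i, j distinct from k. *)
theory Submission
  imports Defs
begin

lemma lookup_zmult: "Poly_Mapping.lookup (zmult n x) p = n * Poly_Mapping.lookup x p"
  unfolding zmult_def by transfer (simp add: when_def)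

lemma zmult_add: "zmult n (x + y) = zmult n x + zmult n y"
  by (rule poly_mapping_eqI) (simp add: lookup_zmult lookup_add algebra_simps)

lemma zmult_diff: "zmult n (x - y) = zmult n x - zmult n y"
  by (rule poly_mapping_eqI) (simp add: lookup_zmult lookup_minus algebra_simps)

lemma zmult_minus: "zmult n (- x) = - zmult n x"
  by (rule poly_mapping_eqI) (simp add: lookup_zmult)

lemma zmult_add_left: "zmult (m + n) x = zmult m x + zmult n x"
  by (rule poly_mapping_eqI) (simp add: lookup_zmult lookup_add algebra_simps)

lemma zmult_diff_left: "zmult (m - n) x = zmult m x - zmult n x"
  by (rule poly_mapping_eqI) (simp add: lookup_zmult lookup_minus algebra_simps)

lemma zmult_minus_left: "zmult (- m) x = - zmult m x"
  by (rule poly_mapping_eqI) (simp add: lookup_zmult)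

lemma zmult_zmult: "zmult m (zmult n x) = zmult (m * n) x"
  by (rule poly_mapping_eqI) (simp add: lookup_zmult)

lemma zmult_1 [simp]: "zmult 1 x = x"
  by (rule poly_mapping_eqI) (simp add: lookup_zmult)

lemma zmult_0 [simp]: "zmult 0 x = 0"
  by (rule poly_mapping_eqI) (simp add: lookup_zmult)

lemma zmult_sum: "zmult n (sum f A) = (\<Sum>a\<in>A. zmult n (f a))"
  by (rule poly_mapping_eqI) (simp add: lookup_zmult lookup_sum sum_distrib_left)

lemma zmult_sum_left: "zmult (sum f A) x = (\<Sum>a\<in>A. zmult (f a) x)"
  by (rule poly_mapping_eqI) (simp add: lookup_zmult lookup_sum sum_distrib_right)

lemma wedge_relations_diff:
  "x \<in> wedge_relations \<Longrightarrow> y \<in> wedge_relations \<Longrightarrow> x - y \<in> wedge_relations"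
  using wedge_relations.add[of x "- y"] wedge_relations.neg[of y] by simp

lemma wedge_relations_zmult_nat: "x \<in> wedge_relations \<Longrightarrow> zmult (int m) x \<in> wedge_relations"
  by (induction m) (simp_all add: wedge_relations.zero wedge_relations.add zmult_add_left)

lemma wedge_relations_zmult: "x \<in> wedge_relations \<Longrightarrow> zmult n x \<in> wedge_relations"
  by (cases n rule: int_cases2)
    (auto simp: zmult_minus_left intro: wedge_relations_zmult_nat wedge_relations.neg)

lemma wedge_relations_sum:
  "(\<And>a. a \<in> A \<Longrightarrow> f a \<in> wedge_relations) \<Longrightarrow> sum f A \<in> wedge_relations"
  by (induction A rule: infinite_finite_induct)
    (simp_all add: wedge_relations.zero wedge_relations.add)

lemma wedge_eq_refl: "wedge_eq x x"
  by (simp add: wedge_eq_def wedge_relations.zero)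

lemma wedge_eq_sym: "wedge_eq x y \<Longrightarrow> wedge_eq y x"
  unfolding wedge_eq_def using wedge_relations.neg[of "x - y"] by simp

lemma wedge_eq_trans [trans]: "wedge_eq x y \<Longrightarrow> wedge_eq y z \<Longrightarrow> wedge_eq x z"
  unfolding wedge_eq_def using wedge_relations.add[of "x - y" "y - z"] by simp

lemma wedge_eq_add: "wedge_eq x y \<Longrightarrow> wedge_eq x' y' \<Longrightarrow> wedge_eq (x + x') (y + y')"
  unfolding wedge_eq_def using wedge_relations.add[of "x - y" "x' - y'"]
  by (simp add: algebra_simps)

lemma wedge_eq_diff: "wedge_eq x y \<Longrightarrow> wedge_eq x' y' \<Longrightarrow> wedge_eq (x - x') (y - y')"
  unfolding wedge_eq_def using wedge_relations_diff[of "x - y" "x' - y'"]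
  by (simp add: algebra_simps)

lemma wedge_eq_minus: "wedge_eq x y \<Longrightarrow> wedge_eq (- x) (- y)"
  unfolding wedge_eq_def using wedge_relations.neg[of "x - y"] by (simp add: algebra_simps)

lemma wedge_eq_zmult: "wedge_eq x y \<Longrightarrow> wedge_eq (zmult n x) (zmult n y)"
  unfolding wedge_eq_def using wedge_relations_zmult[of "x - y" n] by (simp add: zmult_diff)

lemma wedge_eq_sum:
  "(\<And>a. a \<in> A \<Longrightarrow> wedge_eq (f a) (g a)) \<Longrightarrow> wedge_eq (sum f A) (sum g A)"
  unfolding wedge_eq_def using wedge_relations_sum[of A "\<lambda>a. f a - g a"]
  by (simp add: sum_subtractf)

lemma wedge_mult_left:
  fixes a b c :: "'k::field"
  shows "a \<noteq> 0 \<Longrightarrow> b \<noteq> 0 \<Longrightarrow> c \<noteq> 0 \<Longrightarrow> wedge_eq (wedge (a * b) c) (wedge a c + wedge b c)"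
  unfolding wedge_eq_def using wedge_relations.lin1[of a b c] by (simp add: algebra_simps)

lemma wedge_mult_right:
  fixes a b c :: "'k::field"
  shows "a \<noteq> 0 \<Longrightarrow> b \<noteq> 0 \<Longrightarrow> c \<noteq> 0 \<Longrightarrow> wedge_eq (wedge a (b * c)) (wedge a b + wedge a c)"
  unfolding wedge_eq_def using wedge_relations.lin2[of a b c] by (simp add: algebra_simps)

lemma wedge_one_left:
  fixes c :: "'k::field"
  shows "c \<noteq> 0 \<Longrightarrow> wedge_eq (wedge 1 c) 0"
  unfolding wedge_eq_def using wedge_relations.neg[OF wedge_relations.lin1[of 1 1 c]] by simp

lemma wedge_inverse_left:
  fixes a c :: "'k::field"
  assumes "a \<noteq> 0" "c \<noteq> 0"
  shows "wedge_eq (wedge (inverse a) c) (- wedge a c)"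
proof -
  have "wedge_eq 0 (wedge (a * inverse a) c)"
    using assms by (simp add: wedge_eq_sym wedge_one_left)
  also have "wedge_eq \<dots> (wedge a c + wedge (inverse a) c)"
    using assms by (intro wedge_mult_left) simp_all
  finally have "wedge_eq (wedge a c + wedge (inverse a) c) 0"
    by (rule wedge_eq_sym)
  then show ?thesis
    unfolding wedge_eq_def by (simp add: algebra_simps)
qed

lemma wedge_power_left:
  fixes a c :: "'k::field"
  shows "a \<noteq> 0 \<Longrightarrow> c \<noteq> 0 \<Longrightarrow> wedge_eq (wedge (a ^ n) c) (zmult (int n) (wedge a c))"
proof (induction n)
  case 0
  then show ?case by (simp add: wedge_one_left)
next
  case (Suc n)
  have "wedge_eq (wedge (a ^ Suc n) c) (wedge a c + wedge (a ^ n) c)"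
    using Suc.prems wedge_mult_left[of a "a ^ n" c] by simp
  also have "wedge_eq \<dots> (wedge a c + zmult (int n) (wedge a c))"
    using Suc by (intro wedge_eq_add wedge_eq_refl)
  finally show ?case
    by (simp add: zmult_add_left add.commute)
qed

lemma wedge_power_int_left:
  fixes a c :: "'k::field"
  assumes "a \<noteq> 0" "c \<noteq> 0"
  shows "wedge_eq (wedge (a powi n) c) (zmult n (wedge a c))"
proof (cases "n \<ge> 0")
  case True
  then show ?thesis
    using wedge_power_left[OF assms, of "nat n"] by (simp add: power_int_def)
next
  case False
  then have "wedge (a powi n) c = wedge (inverse (a ^ nat (- n))) c"
    by (simp add: power_int_def power_inverse)
  also have "wedge_eq \<dots> (- wedge (a ^ nat (- n)) c)"
    using assms by (intro wedge_inverse_left) simp_all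
  also have "wedge_eq \<dots> (- zmult (int (nat (- n))) (wedge a c))"
    using assms by (intro wedge_eq_minus wedge_power_left)
  finally show ?thesis
    using False by (simp add: zmult_minus_left[symmetric])
qed

lemma wedge_prod_left:
  fixes c :: "'k::field"
  assumes "finite A" "\<And>x. x \<in> A \<Longrightarrow> f x \<noteq> 0" "c \<noteq> 0"
  shows "wedge_eq (wedge (prod f A) c) (\<Sum>x\<in>A. wedge (f x) c)"
  using assms
proof (induction A rule: finite_induct)
  case empty
  then show ?case by (simp add: wedge_one_left)
next
  case (insert x A)
  have "wedge_eq (wedge (prod f (insert x A)) c) (wedge (f x) c + wedge (prod f A) c)"
    using insert by (simp add: wedge_mult_left)
  also have "wedge_eq \<dots> (wedge (f x) c + (\<Sum>y\<in>A. wedge (f y) c))"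
    using insert by (intro wedge_eq_add wedge_eq_refl) auto
  finally show ?case
    using insert by simp
qed

lemma wedge_antisym:
  fixes a b :: "'k::field"
  assumes "a \<noteq> 0" "b \<noteq> 0"
  shows "wedge_eq (wedge b a) (- wedge a b)"
proof -
  have "wedge_eq (wedge (a * b) (a * b)) 0"
    using assms wedge_relations.alt[of "a * b"] unfolding wedge_eq_def by simp
  then have "wedge_eq 0 (wedge (a * b) (a * b))"
    by (rule wedge_eq_sym)
  also have "wedge_eq \<dots> (wedge a (a * b) + wedge b (a * b))"
    using assms by (intro wedge_mult_left) simp_all
  also have "wedge_eq \<dots> ((wedge a a + wedge a b) + (wedge b a + wedge b b))"
    using assms by (intro wedge_eq_add wedge_mult_right)
  also have "wedge_eq \<dots> ((0 + wedge a b) + (wedge b a + 0))"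
    using assms wedge_relations.alt[of a] wedge_relations.alt[of b]
    by (intro wedge_eq_add wedge_eq_refl) (simp_all add: wedge_eq_def)
  finally have "wedge_eq (wedge a b + wedge b a) 0"
    using wedge_eq_sym by fastforce
  then show ?thesis
    unfolding wedge_eq_def by (simp add: algebra_simps)
qed

section \<open>Wedges of Laurent monomials\<close>

definition laurent_monomial :: "('g \<Rightarrow> 'k::field) \<Rightarrow> ('g \<Rightarrow> int) \<Rightarrow> 'k" where
  "laurent_monomial v u = (\<Prod>g\<in>UNIV. v g powi u g)"

definition wedge_form :: "('g \<Rightarrow> 'k) \<Rightarrow> ('g \<Rightarrow> 'g \<Rightarrow> int) \<Rightarrow> 'k wsum" where
  "wedge_form v F = (\<Sum>g\<in>UNIV. \<Sum>h\<in>UNIV. zmult (F g h) (wedge (v g) (v h)))"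

lemma laurent_monomial_nonzero:
  "(\<And>g. v g \<noteq> 0) \<Longrightarrow> laurent_monomial v (u :: 'g::finite \<Rightarrow> int) \<noteq> 0"
  unfolding laurent_monomial_def by (simp add: prod_zero_iff)

lemma prod_power_int_of_bool:
  "(\<Prod>j\<in>(UNIV :: 'i::finite set). (f j :: 'k::field) powi (of_bool (j = i) * c)) = f i powi c"
proof -
  have "(\<Prod>j\<in>(UNIV :: 'i set). f j powi (of_bool (j = i) * c)) = (\<Prod>j\<in>UNIV. if j = i then f j powi c else 1)"
    by (intro prod.cong) auto
  then show ?thesis
    by simp
qed

lemma laurent_monomial_single:
  "laurent_monomial v (\<lambda>g::'g::finite. of_bool (g = g0) * c) = v g0 powi c"
  by (simp add: laurent_monomial_def prod_power_int_of_bool)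

lemma laurent_monomial_unit:
  "laurent_monomial v (\<lambda>g::'g::finite. of_bool (g = g0)) = v g0"
  using laurent_monomial_single[of v g0 1] by simp

lemma wedge_laurent_monomial_left:
  fixes v :: "'g::finite \<Rightarrow> 'k::field"
  assumes "\<And>g. v g \<noteq> 0" "c \<noteq> 0"
  shows "wedge_eq (wedge (laurent_monomial v u) c) (\<Sum>g\<in>UNIV. zmult (u g) (wedge (v g) c))"
proof -
  have "wedge_eq (wedge (laurent_monomial v u) c) (\<Sum>g\<in>UNIV. wedge (v g powi u g) c)"
    unfolding laurent_monomial_def using assms by (intro wedge_prod_left) auto
  also have "wedge_eq \<dots> (\<Sum>g\<in>UNIV. zmult (u g) (wedge (v g) c))"
    using assms by (intro wedge_eq_sum wedge_power_int_left)
  finally show ?thesis .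
qed

lemma wedge_laurent_monomial_right:
  fixes v :: "'g::finite \<Rightarrow> 'k::field"
  assumes "\<And>g. v g \<noteq> 0" "c \<noteq> 0"
  shows "wedge_eq (wedge c (laurent_monomial v u)) (\<Sum>g\<in>UNIV. zmult (u g) (wedge c (v g)))"
proof -
  have "wedge_eq (wedge c (laurent_monomial v u)) (- wedge (laurent_monomial v u) c)"
    using assms by (intro wedge_antisym laurent_monomial_nonzero)
  also have "wedge_eq \<dots> (- (\<Sum>g\<in>UNIV. zmult (u g) (wedge (v g) c)))"
    using assms by (intro wedge_eq_minus wedge_laurent_monomial_left)
  also have "\<dots> = (\<Sum>g\<in>UNIV. zmult (u g) (- wedge (v g) c))"
    by (simp add: zmult_minus sum_negf)
  also have "wedge_eq \<dots> (\<Sum>g\<in>UNIV. zmult (u g) (wedge c (v g)))"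
    using assms by (intro wedge_eq_sum wedge_eq_zmult wedge_eq_sym[OF wedge_antisym])
  finally show ?thesis .
qed

lemma wedge_laurent_monomials:
  fixes v :: "'g::finite \<Rightarrow> 'k::field"
  assumes "\<And>g. v g \<noteq> 0"
  shows "wedge_eq (wedge (laurent_monomial v u) (laurent_monomial v w))
           (wedge_form v (\<lambda>g h. u g * w h))"
proof -
  have "wedge_eq (wedge (laurent_monomial v u) (laurent_monomial v w))
          (\<Sum>g\<in>UNIV. zmult (u g) (wedge (v g) (laurent_monomial v w)))"
    using assms by (intro wedge_laurent_monomial_left laurent_monomial_nonzero)
  also have "wedge_eq \<dots> (\<Sum>g\<in>UNIV. zmult (u g) (\<Sum>h\<in>UNIV. zmult (w h) (wedge (v g) (v h))))"
    using assms by (intro wedge_eq_sum wedge_eq_zmult wedge_laurent_monomial_right)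
  finally show ?thesis
    unfolding wedge_form_def by (simp add: zmult_sum zmult_zmult)
qed

lemma wedge_form_diff: "wedge_form v (\<lambda>g h. F g h - G g h) = wedge_form v F - wedge_form v G"
  unfolding wedge_form_def by (simp add: zmult_diff_left sum_subtractf)

lemma wedge_form_minus: "wedge_form v (\<lambda>g h. - F g h) = - wedge_form v F"
  unfolding wedge_form_def by (simp add: zmult_minus_left sum_negf)

lemma wedge_form_scale: "zmult c (wedge_form v F) = wedge_form v (\<lambda>g h. c * F g h)"
  unfolding wedge_form_def by (simp add: zmult_sum zmult_zmult)

lemma wedge_form_scaled_sum:
  "wedge_form v (\<lambda>g h. \<Sum>a\<in>A. c a * F a g h) = (\<Sum>a\<in>A. zmult (c a) (wedge_form v (F a)))"
proof -
  have "wedge_form v (\<lambda>g h. \<Sum>a\<in>A. c a * F a g h)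
      = (\<Sum>g\<in>UNIV. \<Sum>h\<in>UNIV. \<Sum>a\<in>A. zmult (c a) (zmult (F a g h) (wedge (v g) (v h))))"
    unfolding wedge_form_def by (simp add: zmult_sum_left zmult_zmult)
  also have "\<dots> = (\<Sum>a\<in>A. \<Sum>g\<in>UNIV. \<Sum>h\<in>UNIV. zmult (c a) (zmult (F a g h) (wedge (v g) (v h))))"
    by (simp only: sum.swap[where A = A])
  finally show ?thesis
    unfolding wedge_form_def by (simp add: zmult_sum)
qed

lemma symmetric_wedge_sum_in_relations:
  fixes v :: "'g \<Rightarrow> 'k::field"
  assumes "finite A" "\<And>g h. F g h = F h g" "\<And>g. g \<in> A \<Longrightarrow> v g \<noteq> 0"
  shows "(\<Sum>g\<in>A. \<Sum>h\<in>A. zmult (F g h) (wedge (v g) (v h))) \<in> wedge_relations"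
  using assms
proof (induction A rule: finite_induct)
  case empty
  then show ?case by (simp add: wedge_relations.zero)
next
  case (insert a A)
  let ?w = "\<lambda>g h. zmult (F g h) (wedge (v g) (v h))"
  have split: "(\<Sum>g\<in>insert a A. \<Sum>h\<in>insert a A. ?w g h)
      = (\<Sum>g\<in>A. \<Sum>h\<in>A. ?w g h) + ?w a a
        + (\<Sum>h\<in>A. zmult (F a h) (wedge (v a) (v h) + wedge (v h) (v a)))"
  proof -
    have "(\<Sum>g\<in>insert a A. \<Sum>h\<in>insert a A. ?w g h)
        = (?w a a + (\<Sum>h\<in>A. ?w a h)) + (\<Sum>g\<in>A. ?w g a + (\<Sum>h\<in>A. ?w g h))"
      using insert.hyps by simp
    also have "\<dots> = (\<Sum>g\<in>A. \<Sum>h\<in>A. ?w g h) + ?w a a + ((\<Sum>h\<in>A. ?w a h) + (\<Sum>h\<in>A. ?w h a))"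
      by (simp only: sum.distrib add_ac)
    also have "(\<Sum>h\<in>A. ?w a h) + (\<Sum>h\<in>A. ?w h a)
        = (\<Sum>h\<in>A. zmult (F a h) (wedge (v a) (v h) + wedge (v h) (v a)))"
      by (simp only: sum.distrib[symmetric] zmult_add insert.prems(1)[of _ a])
    finally show ?thesis .
  qed
  have diagonal: "?w a a \<in> wedge_relations"
    using insert.prems(2) by (simp add: wedge_relations.alt wedge_relations_zmult)
  have "wedge (v a) (v h) + wedge (v h) (v a) \<in> wedge_relations" if "h \<in> A" for h
    using wedge_antisym[of "v a" "v h"] insert.prems(2) that by (simp add: wedge_eq_def add.commute)
  then have off_diagonal:
    "(\<Sum>h\<in>A. zmult (F a h) (wedge (v a) (v h) + wedge (v h) (v a))) \<in> wedge_relations"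
    by (intro wedge_relations_sum wedge_relations_zmult)
  show ?case
    unfolding split using insert.IH insert.prems diagonal off_diagonal
    by (simp add: wedge_relations.add)
qed

lemma wedge_form_eqI:
  fixes v :: "'g::finite \<Rightarrow> 'k::field"
  assumes "\<And>g h. F g h - F h g = G g h - G h g" "\<And>g. v g \<noteq> 0"
  shows "wedge_eq (wedge_form v F) (wedge_form v G)"
proof -
  have "F g h - G g h = F h g - G h g" for g h
    using assms(1)[of g h] by linarith
  then have "wedge_form v (\<lambda>g h. F g h - G g h) \<in> wedge_relations"
    unfolding wedge_form_def by (intro symmetric_wedge_sum_in_relations) (simp_all add: assms(2))
  then show ?thesis
    by (simp add: wedge_eq_def wedge_form_diff)
qed

lemma sum_less_pairs_skew:
  fixes c :: "'i::{finite,linorder} \<Rightarrow> 'i \<Rightarrow> int"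
  assumes skew: "\<And>i j. c i j = - c j i"
  shows "(\<Sum>(i,j)\<in>{(i,j). i < j}. c i j * (x i * y j)) - (\<Sum>(i,j)\<in>{(i,j). i < j}. c i j * (y i * x j))
       = (\<Sum>i\<in>UNIV. \<Sum>j\<in>UNIV. c i j * (x i * y j))"
proof -
  let ?f = "\<lambda>(i,j). c i j * (x i * y j)"
  have "c i j * (y i * x j) = - ?f (j, i)" for i j
    using skew[of i j] by (simp add: mult_ac)
  then have "(\<Sum>(i,j)\<in>{(i,j). i < j}. c i j * (y i * x j)) = - (\<Sum>(i,j)\<in>{(i,j). i < j}. ?f (j, i))"
    by (simp add: sum_negf case_prod_beta)
  also have "(\<Sum>(i,j)\<in>{(i,j). i < j}. ?f (j, i)) = (\<Sum>p\<in>{(i,j). j < i}. ?f p)"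
    by (rule sum.reindex_bij_witness[of _ prod.swap prod.swap]) auto
  finally have less: "(\<Sum>(i,j)\<in>{(i,j). i < j}. c i j * (y i * x j)) = - (\<Sum>p\<in>{(i,j). j < i}. ?f p)" .
  have "c i i = 0" for i
    using skew[of i i] by simp
  then have "(\<Sum>p\<in>UNIV. ?f p) = (\<Sum>p\<in>{(i,j). i < j} \<union> {(i,j). j < i}. ?f p)"
    by (intro sum.mono_neutral_right) (auto simp: not_less_iff_gr_or_eq simp del: mult_eq_0_iff)
  also have "\<dots> = (\<Sum>p\<in>{(i,j). i < j}. ?f p) + (\<Sum>p\<in>{(i,j). j < i}. ?f p)"
    by (intro sum.union_disjoint) auto
  finally show ?thesis
    unfolding less by (simp add: sum.cartesian_product)
qed

definition W_coeffs ::
  "('i::{finite,linorder} \<Rightarrow> 'i \<Rightarrow> int) \<Rightarrow> ('i \<Rightarrow> int) \<Rightarrow> ('i \<Rightarrow> 'g \<Rightarrow> int) \<Rightarrow> ('i \<Rightarrow> 'g \<Rightarrow> int)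
     \<Rightarrow> 'g \<Rightarrow> 'g \<Rightarrow> int" where
  "W_coeffs \<epsilon> d U Y g h =
     - (\<Sum>(i,j)\<in>{(i,j). i < j}. d i * \<epsilon> i j * (U i g * U j h)) - (\<Sum>i\<in>UNIV. d i * (U i g * Y i h))"

lemma W_laurent_monomials:
  fixes v :: "'g::finite \<Rightarrow> 'k::field"
  assumes "\<And>g. v g \<noteq> 0"
  shows "wedge_eq (W \<epsilon> d (\<lambda>i. laurent_monomial v (U i)) (\<lambda>i. laurent_monomial v (Y i)))
           (wedge_form v (W_coeffs \<epsilon> d U Y))"
proof -
  let ?P = "{(i,j). i < j}"
  have "wedge_eq (W \<epsilon> d (\<lambda>i. laurent_monomial v (U i)) (\<lambda>i. laurent_monomial v (Y i)))
     (- (\<Sum>(i,j)\<in>?P. zmult (d i * \<epsilon> i j) (wedge_form v (\<lambda>g h. U i g * U j h)))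
      - (\<Sum>i\<in>UNIV. zmult (d i) (wedge_form v (\<lambda>g h. U i g * Y i h))))"
    unfolding W_def using assms
    by (intro wedge_eq_diff wedge_eq_minus wedge_eq_sum) (auto intro: wedge_eq_zmult wedge_laurent_monomials)
  also have "\<dots> = wedge_form v (W_coeffs \<epsilon> d U Y)"
    using wedge_form_scaled_sum[of v "\<lambda>(i,j). d i * \<epsilon> i j" "\<lambda>(i,j) g h. U i g * U j h" ?P]
      wedge_form_scaled_sum[of v d "\<lambda>i g h. U i g * Y i h" UNIV]
    unfolding W_coeffs_def wedge_form_diff wedge_form_minus
    by (simp add: case_prod_beta' mult.assoc)
  finally show ?thesis .
qed

lemma W_coeffs_antisym:
  assumes "\<And>i j. d i * \<epsilon> i j = - (d j * \<epsilon> j i)"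
  shows "W_coeffs \<epsilon> d U Y g h - W_coeffs \<epsilon> d U Y h g
       = - (\<Sum>i\<in>UNIV. \<Sum>j\<in>UNIV. d i * \<epsilon> i j * (U i g * U j h))
         - (\<Sum>i\<in>UNIV. d i * (U i g * Y i h - U i h * Y i g))"
  using sum_less_pairs_skew[of "\<lambda>i j. d i * \<epsilon> i j" "\<lambda>i. U i g" "\<lambda>i. U i h", OF assms]
  unfolding W_coeffs_def by (simp add: right_diff_distrib sum_subtractf)

section \<open>Nonvanishing in the field of rational functions\<close>

definition ratfun_monom :: "('i \<times> bool \<Rightarrow>\<^sub>0 nat) \<Rightarrow> 'i::linorder ratfun" where
  "ratfun_monom m = Fract (Poly_Mapping.single m 1) 1"

lemma ratfun_monom_mult: "ratfun_monom a * ratfun_monom b = ratfun_monom (a + b)"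
  by (simp add: ratfun_monom_def mult_single)

lemma ratfun_monom_0: "ratfun_monom 0 = 1"
  by (simp add: ratfun_monom_def One_fract_def)

lemma ratfun_monom_nonzero: "ratfun_monom m \<noteq> 0"
  by (simp add: ratfun_monom_def Zero_fract_def eq_fract)
    (metis lookup_single_eq lookup_zero zero_neq_one)

lemma var_eq_ratfun_monom: "var v = ratfun_monom (Poly_Mapping.single v 1)"
  by (simp add: var_def ratfun_monom_def)

definition monoms_without_X :: "'i \<Rightarrow> 'i::linorder ratfun set" where
  "monoms_without_X k = {ratfun_monom m | m. Poly_Mapping.lookup m (k, True) = 0}"

lemma one_in_monoms_without_X: "1 \<in> monoms_without_X k"
  unfolding monoms_without_X_def using ratfun_monom_0 by force

lemma mult_in_monoms_without_X:
  "a \<in> monoms_without_X k \<Longrightarrow> b \<in> monoms_without_X k \<Longrightarrow> a * b \<in> monoms_without_X k"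
  unfolding monoms_without_X_def by (auto simp: ratfun_monom_mult lookup_add)

lemma power_in_monoms_without_X: "a \<in> monoms_without_X k \<Longrightarrow> a ^ n \<in> monoms_without_X k"
  by (induction n) (simp_all add: one_in_monoms_without_X mult_in_monoms_without_X)

lemma prod_in_monoms_without_X:
  "(\<And>x. x \<in> A \<Longrightarrow> f x \<in> monoms_without_X k) \<Longrightarrow> prod f A \<in> monoms_without_X k"
  by (induction A rule: infinite_finite_induct)
    (simp_all add: one_in_monoms_without_X mult_in_monoms_without_X)

lemma Bvar_in_monoms_without_X: "Bvar j \<in> monoms_without_X k"
  unfolding monoms_without_X_def Bvar_def var_eq_ratfun_monom by (auto simp: lookup_single)

lemma monom_plus_Xvar_times_monom_nonzero:
  assumes "a \<in> monoms_without_X k" "b \<in> monoms_without_X k"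
  shows "a + Xvar k * b \<noteq> 0"
proof -
  obtain m n where m: "a = ratfun_monom m" "Poly_Mapping.lookup m (k, True) = 0"
    and n: "b = ratfun_monom n"
    using assms unfolding monoms_without_X_def by auto
  define n' where "n' = Poly_Mapping.single (k, True) 1 + n"
  have "Xvar k * b = ratfun_monom n'"
    by (simp add: n n'_def Xvar_def var_eq_ratfun_monom ratfun_monom_mult)
  then have sum_eq: "a + Xvar k * b = Fract (Poly_Mapping.single m 1 + Poly_Mapping.single n' 1) 1"
    by (simp add: m ratfun_monom_def)
  have "m \<noteq> n'"
    using m(2) by (auto simp: n'_def lookup_add)
  then have "Poly_Mapping.lookup (Poly_Mapping.single m 1 + Poly_Mapping.single n' 1) m = (1::rat)"
    by (simp add: lookup_add lookup_single)
  then have "Poly_Mapping.single m 1 + Poly_Mapping.single n' (1::rat) \<noteq> 0"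
    by auto
  then show ?thesis
    unfolding sum_eq by (simp add: Zero_fract_def eq_fract)
qed

lemma Bvar_nonzero: "Bvar i \<noteq> 0"
  by (simp add: Bvar_def var_eq_ratfun_monom ratfun_monom_nonzero)

lemma Xvar_nonzero: "Xvar i \<noteq> 0"
  by (simp add: Xvar_def var_eq_ratfun_monom ratfun_monom_nonzero)

lemma one_plus_Xvar_nonzero: "1 + Xvar k \<noteq> 0"
  using monom_plus_Xvar_times_monom_nonzero[OF one_in_monoms_without_X one_in_monoms_without_X]
  by simp

lemma Bminus_plus_Xvar_Bplus_nonzero: "Bminus \<epsilon> Bvar k + Xvar k * Bplus \<epsilon> Bvar k \<noteq> 0"
  unfolding Bminus_def Bplus_def
  by (intro monom_plus_Xvar_times_monom_nonzero prod_in_monoms_without_X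
      power_in_monoms_without_X Bvar_in_monoms_without_X)

section \<open>The mutation map in Laurent monomial coordinates\<close>

lemma Bplus_eq_prod_power_int: "Bplus \<epsilon> B k = (\<Prod>j\<in>UNIV. B j powi max (\<epsilon> k j) 0)"
proof -
  have "B j powi max (\<epsilon> k j) 0 = (if \<epsilon> k j > 0 then B j ^ nat (\<epsilon> k j) else 1)" for j
    by (simp add: power_int_def)
  then show ?thesis
    by (simp add: Bplus_def prod.If_cases)
qed

lemma Bminus_eq_prod_power_int: "Bminus \<epsilon> B k = (\<Prod>j\<in>UNIV. B j powi max (- \<epsilon> k j) 0)"
proof -
  have "B j powi max (- \<epsilon> k j) 0 = (if \<epsilon> k j < 0 then B j ^ nat (- \<epsilon> k j) else 1)" for j
    by (simp add: power_int_def)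
  then show ?thesis
    by (simp add: Bminus_def prod.If_cases)
qed

lemma Bminus_nonzero: "(\<And>j. B j \<noteq> 0) \<Longrightarrow> Bminus \<epsilon> B k \<noteq> 0"
  unfolding Bminus_def by (simp add: prod_zero_iff)

lemma prod_power_int_eq_Bplus_div_Bminus:
  assumes "\<And>j. (B j :: 'k::field) \<noteq> 0"
  shows "(\<Prod>j\<in>UNIV. B j powi \<epsilon> k j) = Bplus \<epsilon> B k / Bminus \<epsilon> B k"
proof -
  have "B j powi \<epsilon> k j = B j powi max (\<epsilon> k j) 0 / B j powi max (- \<epsilon> k j) 0" for j
    using assms by (simp add: power_int_diff [symmetric] max_def)
  then show ?thesis
    by (simp add: Bplus_eq_prod_power_int Bminus_eq_prod_power_int prod_dividef)
qed

lemma one_plus_Xtilde_eq: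
  assumes "\<And>j. (B j :: 'k::field) \<noteq> 0"
  shows "1 + Xtilde \<epsilon> B X k = (Bminus \<epsilon> B k + X k * Bplus \<epsilon> B k) / Bminus \<epsilon> B k"
  using Bminus_nonzero[of B, OF assms]
  by (simp add: Xtilde_def prod_power_int_eq_Bplus_div_Bminus assms field_simps)

datatype 'i generator = GenB 'i | GenX 'i | OnePlusX | OnePlusXtilde

lemma UNIV_generator: "UNIV = range GenB \<union> range GenX \<union> {OnePlusX, OnePlusXtilde}"
proof -
  have "g \<in> range GenB \<union> range GenX \<union> {OnePlusX, OnePlusXtilde}" for g :: "'i generator"
    by (cases g) auto
  then show ?thesis
    by blast
qed

instance generator :: (finite) finite
  by standard (simp add: UNIV_generator)

lemma prod_UNIV_generator:
  "(\<Prod>g\<in>(UNIV :: 'i::finite generator set). f g)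
     = (\<Prod>i\<in>UNIV. f (GenB i)) * (\<Prod>i\<in>UNIV. f (GenX i)) * f OnePlusX * f OnePlusXtilde"
proof -
  have "(\<Prod>g\<in>(UNIV :: 'i generator set). f g)
      = (\<Prod>g\<in>range GenB. f g) * (\<Prod>g\<in>range GenX. f g) * (\<Prod>g\<in>{OnePlusX, OnePlusXtilde}. f g)"
    unfolding UNIV_generator by (subst prod.union_disjoint, auto)+
  also have "(\<Prod>g\<in>range GenB. f g) = (\<Prod>i\<in>UNIV. f (GenB i))"
    by (rule prod.reindex_cong[of GenB]) (auto simp: inj_def)
  also have "(\<Prod>g\<in>range GenX. f g) = (\<Prod>i\<in>UNIV. f (GenX i))"
    by (rule prod.reindex_cong[of GenX]) (auto simp: inj_def)
  finally show ?thesis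
    by (simp add: mult.assoc)
qed

definition generator_value :: "('i::{finite,linorder} \<Rightarrow> 'i \<Rightarrow> int) \<Rightarrow> 'i \<Rightarrow> 'i generator \<Rightarrow> 'i ratfun" where
  "generator_value \<epsilon> k g = (case g of GenB i \<Rightarrow> Bvar i | GenX i \<Rightarrow> Xvar i
     | OnePlusX \<Rightarrow> 1 + Xvar k | OnePlusXtilde \<Rightarrow> 1 + Xtilde \<epsilon> Bvar Xvar k)"

lemma one_plus_Xtilde_nonzero: "1 + Xtilde \<epsilon> Bvar Xvar k \<noteq> 0"
  using Bminus_plus_Xvar_Bplus_nonzero[of \<epsilon> k] Bminus_nonzero[of Bvar \<epsilon> k, OF Bvar_nonzero]
  by (simp add: one_plus_Xtilde_eq Bvar_nonzero)

lemma generator_value_nonzero: "generator_value \<epsilon> k g \<noteq> 0"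
  by (cases g) (simp_all add: generator_value_def Bvar_nonzero Xvar_nonzero
      one_plus_Xvar_nonzero one_plus_Xtilde_nonzero)

lemma laurent_monomial_generator_value:
  "laurent_monomial (generator_value \<epsilon> k) u
     = (\<Prod>i\<in>UNIV. Bvar i powi u (GenB i)) * (\<Prod>i\<in>UNIV. Xvar i powi u (GenX i))
       * (1 + Xvar k) powi u OnePlusX * (1 + Xtilde \<epsilon> Bvar Xvar k) powi u OnePlusXtilde"
  unfolding laurent_monomial_def prod_UNIV_generator by (simp add: generator_value_def)

(* mu_B eps k B X k = B_k^- B_k^-1 (1 + X_k)^-1 (1 + Xtilde_k), by one_plus_Xtilde_eq. *)
definition mu_B_exponent :: "('i \<Rightarrow> 'i \<Rightarrow> int) \<Rightarrow> 'i \<Rightarrow> 'i \<Rightarrow> 'i generator \<Rightarrow> int" where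
  "mu_B_exponent \<epsilon> k i g =
     (if i \<noteq> k then of_bool (g = GenB i)
      else case g of GenB j \<Rightarrow> max (- \<epsilon> k j) 0 - of_bool (j = k) | GenX j \<Rightarrow> 0
        | OnePlusX \<Rightarrow> -1 | OnePlusXtilde \<Rightarrow> 1)"

(* For i distinct from k:
   X_i (1 + X_k^(-sgn eps_ik))^(-eps_ik) = X_i X_k^(max eps_ik 0) (1 + X_k)^(-eps_ik). *)
definition mu_X_exponent :: "('i \<Rightarrow> 'i \<Rightarrow> int) \<Rightarrow> 'i \<Rightarrow> 'i \<Rightarrow> 'i generator \<Rightarrow> int" where
  "mu_X_exponent \<epsilon> k i g =
     (if i = k then - of_bool (g = GenX k)
      else case g of GenB j \<Rightarrow> 0 | GenX j \<Rightarrow> of_bool (j = i) + of_bool (j = k) * max (\<epsilon> i k) 0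
        | OnePlusX \<Rightarrow> - \<epsilon> i k | OnePlusXtilde \<Rightarrow> 0)"

definition Xtilde_exponent :: "('i \<Rightarrow> 'i \<Rightarrow> int) \<Rightarrow> 'i \<Rightarrow> 'i generator \<Rightarrow> int" where
  "Xtilde_exponent \<epsilon> k g = (case g of GenB j \<Rightarrow> \<epsilon> k j | GenX j \<Rightarrow> of_bool (j = k) | _ \<Rightarrow> 0)"

lemma laurent_monomial_mu_B_exponent:
  "laurent_monomial (generator_value \<epsilon> k) (mu_B_exponent \<epsilon> k i) = mu_B \<epsilon> k Bvar Xvar i"
proof (cases "i = k")
  case True
  have "Bvar j powi (max (- \<epsilon> k j) 0 - of_bool (j = k))
      = Bvar j powi max (- \<epsilon> k j) 0 / Bvar j powi (of_bool (j = k) * 1)" for j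
    by (simp add: power_int_diff Bvar_nonzero)
  then have "(\<Prod>j\<in>UNIV. Bvar j powi (max (- \<epsilon> k j) 0 - of_bool (j = k))) = Bminus \<epsilon> Bvar k / Bvar k"
    by (simp only: prod_dividef prod_power_int_of_bool Bminus_eq_prod_power_int power_int_1_right)
  then have "laurent_monomial (generator_value \<epsilon> k) (mu_B_exponent \<epsilon> k k)
      = Bminus \<epsilon> Bvar k / Bvar k / (1 + Xvar k) * (1 + Xtilde \<epsilon> Bvar Xvar k)"
    by (simp add: laurent_monomial_generator_value mu_B_exponent_def power_int_minus divide_inverse)
  also have "\<dots> = mu_B \<epsilon> k Bvar Xvar k"
    using Bminus_nonzero[of Bvar \<epsilon> k, OF Bvar_nonzero] Bvar_nonzero[of k] one_plus_Xvar_nonzero[of k]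
    by (simp add: one_plus_Xtilde_eq Bvar_nonzero mu_B_def)
  finally show ?thesis
    using True by simp
next
  case False
  then have "mu_B_exponent \<epsilon> k i = (\<lambda>g. of_bool (g = GenB i))"
    by (simp add: mu_B_exponent_def fun_eq_iff)
  then show ?thesis
    using False by (simp add: laurent_monomial_unit generator_value_def mu_B_def)
qed

lemma laurent_monomial_mu_X_exponent:
  "laurent_monomial (generator_value \<epsilon> k) (mu_X_exponent \<epsilon> k i) = mu_X \<epsilon> k Xvar i"
proof (cases "i = k")
  case True
  then have "mu_X_exponent \<epsilon> k i = (\<lambda>g. of_bool (g = GenX k) * -1)"
    by (simp add: mu_X_exponent_def fun_eq_iff)
  then show ?thesis
    using True laurent_monomial_single[of "generator_value \<epsilon> k" "GenX k" "-1"]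
    by (simp add: generator_value_def mu_X_def power_int_minus)
next
  case False
  let ?m = "max (\<epsilon> i k) 0"
  have "Xvar j powi (of_bool (j = i) + of_bool (j = k) * ?m)
      = Xvar j powi (of_bool (j = i) * 1) * Xvar j powi (of_bool (j = k) * ?m)" for j
    by (simp add: power_int_add Xvar_nonzero)
  then have "(\<Prod>j\<in>UNIV. Xvar j powi (of_bool (j = i) + of_bool (j = k) * ?m)) = Xvar i * Xvar k powi ?m"
    by (simp only: prod.distrib prod_power_int_of_bool power_int_1_right)
  then have "laurent_monomial (generator_value \<epsilon> k) (mu_X_exponent \<epsilon> k i)
      = Xvar i * Xvar k powi ?m * (1 + Xvar k) powi (- \<epsilon> i k)"
    using False by (simp add: laurent_monomial_generator_value mu_X_exponent_def)
  also have "\<dots> = mu_X \<epsilon> k Xvar i"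
  proof (cases "\<epsilon> i k > 0")
    case True
    have "1 + Xvar k powi (- sgn (\<epsilon> i k)) = (1 + Xvar k) / Xvar k"
      using True Xvar_nonzero[of k] by (simp add: power_int_minus field_simps)
    then show ?thesis
      using True False Xvar_nonzero[of k]
      by (simp add: mu_X_def power_int_divide_distrib power_int_minus field_simps)
  next
    case False
    then show ?thesis
      using \<open>i \<noteq> k\<close> by (cases "\<epsilon> i k = 0") (simp_all add: mu_X_def)
  qed
  finally show ?thesis .
qed

lemma laurent_monomial_Xtilde_exponent:
  "laurent_monomial (generator_value \<epsilon> k) (Xtilde_exponent \<epsilon> k) = Xtilde \<epsilon> Bvar Xvar k"
  using prod_power_int_of_bool[of Xvar k 1]
  by (simp add: laurent_monomial_generator_value Xtilde_exponent_def Xtilde_def mult.commute)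

lemma W_mu_eq_wedge_form:
  "wedge_eq (W \<epsilon>' d (mu_B \<epsilon> k Bvar Xvar) (mu_X \<epsilon> k Xvar))
     (wedge_form (generator_value \<epsilon> k) (W_coeffs \<epsilon>' d (mu_B_exponent \<epsilon> k) (mu_X_exponent \<epsilon> k)))"
  using W_laurent_monomials[of "generator_value \<epsilon> k" \<epsilon>' d "mu_B_exponent \<epsilon> k" "mu_X_exponent \<epsilon> k",
      OF generator_value_nonzero]
  by (simp add: laurent_monomial_mu_B_exponent laurent_monomial_mu_X_exponent)

lemma W_eq_wedge_form:
  "wedge_eq (W \<epsilon>' d Bvar Xvar)
     (wedge_form (generator_value \<epsilon> k)
        (W_coeffs \<epsilon>' d (\<lambda>i g. of_bool (g = GenB i)) (\<lambda>i g. of_bool (g = GenX i))))"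
  using W_laurent_monomials[of "generator_value \<epsilon> k" \<epsilon>' d
      "\<lambda>i g. of_bool (g = GenB i)" "\<lambda>i g. of_bool (g = GenX i)", OF generator_value_nonzero]
  by (simp add: laurent_monomial_unit generator_value_def)

definition mutation_defect_coeffs ::
  "('i \<Rightarrow> 'i \<Rightarrow> int) \<Rightarrow> ('i \<Rightarrow> int) \<Rightarrow> 'i \<Rightarrow> 'i generator \<Rightarrow> 'i generator \<Rightarrow> int" where
  "mutation_defect_coeffs \<epsilon> d k g h =
     d k * (of_bool (g = OnePlusXtilde) * Xtilde_exponent \<epsilon> k h - of_bool (g = OnePlusX) * of_bool (h = GenX k))"

lemma mutation_defect_eq_wedge_form:
  "wedge_eq (zmult (d k) (wedge (1 + Xtilde \<epsilon> Bvar Xvar k) (Xtilde \<epsilon> Bvar Xvar k) - wedge (1 + Xvar k) (Xvar k)))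
     (wedge_form (generator_value \<epsilon> k) (mutation_defect_coeffs \<epsilon> d k))"
proof -
  let ?v = "generator_value \<epsilon> k"
  have "wedge_eq (wedge (1 + Xtilde \<epsilon> Bvar Xvar k) (Xtilde \<epsilon> Bvar Xvar k))
      (wedge_form ?v (\<lambda>g h. of_bool (g = OnePlusXtilde) * Xtilde_exponent \<epsilon> k h))"
    using wedge_laurent_monomials[of ?v "\<lambda>g. of_bool (g = OnePlusXtilde)" "Xtilde_exponent \<epsilon> k",
        OF generator_value_nonzero]
    by (simp add: laurent_monomial_unit laurent_monomial_Xtilde_exponent generator_value_def)
  moreover have "wedge_eq (wedge (1 + Xvar k) (Xvar k))
      (wedge_form ?v (\<lambda>g h. of_bool (g = OnePlusX) * of_bool (h = GenX k)))"
    using wedge_laurent_monomials[of ?v "\<lambda>g. of_bool (g = OnePlusX)" "\<lambda>g. of_bool (g = GenX k)",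
        OF generator_value_nonzero]
    by (simp add: laurent_monomial_unit generator_value_def)
  moreover have "wedge_form ?v (mutation_defect_coeffs \<epsilon> d k)
      = zmult (d k) (wedge_form ?v (\<lambda>g h. of_bool (g = OnePlusXtilde) * Xtilde_exponent \<epsilon> k h)
                     - wedge_form ?v (\<lambda>g h. of_bool (g = OnePlusX) * of_bool (h = GenX k)))"
    by (simp only: mutation_defect_coeffs_def [abs_def] wedge_form_scale wedge_form_diff [symmetric])
  ultimately show ?thesis
    by (simp only: wedge_eq_zmult wedge_eq_diff)
qed

section \<open>Comparison of the coefficient matrices\<close>

lemma sum_mu_B_exponent:
  fixes f :: "'i::finite \<Rightarrow> int"
  shows "(\<Sum>i\<in>UNIV. f i * mu_B_exponent \<epsilon> k i g)
     = f k * mu_B_exponent \<epsilon> k k g + (case g of GenB a \<Rightarrow> of_bool (a \<noteq> k) * f a | _ \<Rightarrow> 0)"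
proof -
  have "(\<Sum>i\<in>UNIV - {k}. f i * mu_B_exponent \<epsilon> k i g) = (\<Sum>i\<in>UNIV - {k}. if g = GenB i then f i else 0)"
    by (intro sum.cong) (auto simp: mu_B_exponent_def)
  also have "\<dots> = (case g of GenB a \<Rightarrow> of_bool (a \<noteq> k) * f a | _ \<Rightarrow> 0)"
    by (cases g) (auto simp: sum.delta')
  finally show ?thesis
    by (simp add: sum.remove[of UNIV k])
qed

lemma sum_of_bool_GenB:
  fixes f :: "'i::finite \<Rightarrow> int"
  shows "(\<Sum>i\<in>UNIV. f i * of_bool (g = GenB i)) = (case g of GenB a \<Rightarrow> f a | _ \<Rightarrow> 0)"
  by (cases g) auto

lemma max_neg_mult_diff:
  "max (- a) 0 * b - max (- b) 0 * a = (if a * b < 0 then \<bar>a\<bar> * b else 0 :: int)"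
  by (auto simp: max_def mult_less_0_iff)

context
  fixes \<epsilon> :: "'i::{finite,linorder} \<Rightarrow> 'i \<Rightarrow> int" and d :: "'i \<Rightarrow> int" and k :: 'i
  assumes skew: "\<And>i j. d i * \<epsilon> i j = - (d j * \<epsilon> j i)" and d_pos: "\<And>i. d i > 0"
begin

lemma epsilon_diag: "\<epsilon> i i = 0"
  using skew[of i i] d_pos[of i] by simp

lemma epsilon_pos_iff_neg: "\<epsilon> i j > 0 \<longleftrightarrow> \<epsilon> j i < 0"
proof -
  have "\<epsilon> i j > 0 \<longleftrightarrow> d i * \<epsilon> i j > 0" "\<epsilon> j i < 0 \<longleftrightarrow> d j * \<epsilon> j i < 0"
    using d_pos[of i] d_pos[of j] by (simp_all add: zero_less_mult_iff mult_less_0_iff)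
  then show ?thesis
    using skew[of i j] by simp
qed

lemma d_abs_skew: "d i * \<bar>\<epsilon> i j\<bar> = d j * \<bar>\<epsilon> j i\<bar>"
  using arg_cong[OF skew[of i j], of abs] d_pos[of i] d_pos[of j] by (simp add: abs_mult)

lemma d_max_skew: "d i * max (\<epsilon> i j) 0 = d j * max (- \<epsilon> j i) 0"
  using skew[of i j] d_pos[of i] d_pos[of j] epsilon_pos_iff_neg[of i j]
  by (auto simp: max_def mult_le_0_iff)

lemma d_mutate:
  "d i * mutate \<epsilon> k i j =
     (if i = k then - (d k * \<epsilon> k j) else if j = k then d k * \<epsilon> k i
      else d i * \<epsilon> i j + d k * (max (- \<epsilon> k i) 0 * \<epsilon> k j - max (- \<epsilon> k j) 0 * \<epsilon> k i))"
proof -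
  have "\<epsilon> i k * \<epsilon> k j \<le> 0 \<longleftrightarrow> \<not> \<epsilon> k i * \<epsilon> k j < 0"
    using epsilon_pos_iff_neg[of i k] epsilon_pos_iff_neg[of k i]
    by (auto simp: mult_le_0_iff mult_less_0_iff)
  then have "(if \<epsilon> i k * \<epsilon> k j \<le> 0 then 0 else d i * (\<bar>\<epsilon> i k\<bar> * \<epsilon> k j))
      = d k * (max (- \<epsilon> k i) 0 * \<epsilon> k j - max (- \<epsilon> k j) 0 * \<epsilon> k i)"
    unfolding max_neg_mult_diff by (simp add: d_abs_skew[of i k] mult.assoc[symmetric])
  then show ?thesis
    using skew[of i k] by (auto simp: mutate_def algebra_simps split: if_splits)
qed

(* Both sides are antisymmetric parts in the shape of W_coeffs_antisym: on the left of the
   coefficient matrix of mu_k^* W_i', on the right of that of W_i plus the defect. *)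
lemma mutation_antisym_identity:
  defines "U \<equiv> mu_B_exponent \<epsilon> k" and "Y \<equiv> mu_X_exponent \<epsilon> k"
    and "unitB \<equiv> \<lambda>i g. of_bool (g = GenB i)" and "unitX \<equiv> \<lambda>i g. of_bool (g = GenX i)"
  shows "- (\<Sum>i\<in>UNIV. \<Sum>j\<in>UNIV. d i * mutate \<epsilon> k i j * (U i g * U j h))
           - (\<Sum>i\<in>UNIV. d i * (U i g * Y i h - U i h * Y i g))
       = - (\<Sum>i\<in>UNIV. \<Sum>j\<in>UNIV. d i * \<epsilon> i j * (unitB i g * unitB j h))
           - (\<Sum>i\<in>UNIV. d i * (unitB i g * unitX i h - unitB i h * unitX i g))
         + (mutation_defect_coeffs \<epsilon> d k g h - mutation_defect_coeffs \<epsilon> d k h g)"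
proof -
  have double_sum: "(\<Sum>i\<in>UNIV. \<Sum>j\<in>UNIV. c i j * (x i * y j))
      = (\<Sum>i\<in>UNIV. (\<Sum>j\<in>UNIV. c i j * y j) * x i)" for c :: "'i \<Rightarrow> 'i \<Rightarrow> int" and x y
    by (simp add: sum_distrib_left sum_distrib_right mult_ac)
  have single_sum: "(\<Sum>i\<in>UNIV. d i * (x i * y' i - x' i * y i))
      = (\<Sum>i\<in>UNIV. (d i * y' i) * x i) - (\<Sum>i\<in>UNIV. (d i * y i) * x' i)"
    for x y x' y' :: "'i \<Rightarrow> int"
    by (simp add: sum_subtractf[symmetric] algebra_simps)
  have skew_k: "i \<noteq> k \<Longrightarrow> d i * \<epsilon> i k = - (d k * \<epsilon> k i)" for i
    by (rule skew)
  show ?thesis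
    unfolding double_sum single_sum U_def unitB_def
    unfolding sum_mu_B_exponent sum_of_bool_GenB
    by (cases g; cases h)
      (simp_all add: Y_def unitX_def mu_B_exponent_def mu_X_exponent_def Xtilde_exponent_def
        mutation_defect_coeffs_def d_mutate epsilon_diag skew_k d_max_skew algebra_simps)
qed

lemma d_mutate_skew: "d i * mutate \<epsilon> k i j = - (d j * mutate \<epsilon> k j i)"
  using skew[of i j] by (simp add: d_mutate[of i j] d_mutate[of j i] epsilon_diag algebra_simps)

lemma W_mutation_difference:
  "wedge_eq (W (mutate \<epsilon> k) d (mu_B \<epsilon> k Bvar Xvar) (mu_X \<epsilon> k Xvar) - W \<epsilon> d Bvar Xvar)
     (zmult (d k) (wedge (1 + Xtilde \<epsilon> Bvar Xvar k) (Xtilde \<epsilon> Bvar Xvar k) - wedge (1 + Xvar k) (Xvar k)))"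
proof -
  let ?v = "generator_value \<epsilon> k"
  let ?F_new = "W_coeffs (mutate \<epsilon> k) d (mu_B_exponent \<epsilon> k) (mu_X_exponent \<epsilon> k)"
    and ?F_old = "W_coeffs \<epsilon> d (\<lambda>i g. of_bool (g = GenB i)) (\<lambda>i g. of_bool (g = GenX i))"
  let ?D = "mutation_defect_coeffs \<epsilon> d k"
  have "?F_new g h - ?F_new h g - (?F_old g h - ?F_old h g) = ?D g h - ?D h g" for g h
    using mutation_antisym_identity[of g h]
    unfolding W_coeffs_antisym[OF d_mutate_skew] W_coeffs_antisym[OF skew] by simp
  then have "(?F_new g h - ?F_old g h) - (?F_new h g - ?F_old h g) = ?D g h - ?D h g" for g h
    by (simp add: algebra_simps)
  then have cancel: "wedge_eq (wedge_form ?v (\<lambda>g h. ?F_new g h - ?F_old g h)) (wedge_form ?v ?D)"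
    using generator_value_nonzero by (intro wedge_form_eqI)
  have "wedge_eq (W (mutate \<epsilon> k) d (mu_B \<epsilon> k Bvar Xvar) (mu_X \<epsilon> k Xvar) - W \<epsilon> d Bvar Xvar)
      (wedge_form ?v (\<lambda>g h. ?F_new g h - ?F_old g h))"
    unfolding wedge_form_diff using W_mu_eq_wedge_form W_eq_wedge_form by (rule wedge_eq_diff)
  also note cancel
  also note wedge_eq_sym[OF mutation_defect_eq_wedge_form]
  finally show ?thesis .
qed

end

lemma is_feed_d_pos: "is_feed \<epsilon> d \<Longrightarrow> d i > 0"
  unfolding is_feed_def by blast

lemma is_feed_skew:
  assumes "is_feed \<epsilon> d"
  shows "d i * \<epsilon> i j = - (d j * \<epsilon> j i)"
proof -
  have "of_int (\<epsilon> i j) / of_int (d j) = - (of_int (\<epsilon> j i) / of_int (d i) :: rat)"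
    using assms unfolding is_feed_def by blast
  then have "of_int (d i * \<epsilon> i j) = (of_int (- (d j * \<epsilon> j i)) :: rat)"
    using is_feed_d_pos[OF assms, of i] is_feed_d_pos[OF assms, of j] by (simp add: field_simps)
  then show ?thesis
    by (simp only: of_int_eq_iff)
qed

theorem proposition2p14:
  fixes \<epsilon> :: "'i::{finite,linorder} \<Rightarrow> 'i \<Rightarrow> int" and d :: "'i \<Rightarrow> int" and k :: 'i
  assumes "is_feed \<epsilon> d"
  defines "B \<equiv> (Bvar :: 'i \<Rightarrow> 'i ratfun)" and "X \<equiv> (Xvar :: 'i \<Rightarrow> 'i ratfun)"
  shows "wedge_eq
           (W (mutate \<epsilon> k) d (mu_B \<epsilon> k B X) (mu_X \<epsilon> k X) - W \<epsilon> d B X)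
           (zmult (d k) (wedge (1 + Xtilde \<epsilon> B X k) (Xtilde \<epsilon> B X k)
                         - wedge (1 + X k) (X k)))"
  unfolding B_def X_def
  using assms by (intro W_mutation_difference is_feed_skew is_feed_d_pos)

end
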